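(* Let $(\Omega,\mathcal F)$ be a measurable space with $\Sigma\neq\emptyset$, $\nu$ a finite measure, and $\mu$ a finite measure with $\mu\ll\nu$. Let $F_\mu(y)=\nu(\{\omega:\frac{d\mu}{d\nu}(\omega)\le y\})$, $F_\mu(+\infty)=\lim_{y\to\infty}F_\mu(y)$, $v_\mu(A)=\int_0^\infty\min(\nu(\Omega)-F_\mu(z),\nu(A))\,dz$, and let $m$ be the measure on $(0,1]$ determined by $m((0,\gamma])=\frac1{\mu(\Omega)}\int_{\{y\ge0:\ F_\mu(y)\ge(1-\gamma)\nu(\Omega)\}}(F_\mu(+\infty)-F_\mu(y))\,dy$, $\gamma\in(0,1]$. Then for every non-negative measurable $f:\Omega\to[0,\infty)$, $$v_\mu(f)=\int_{(0,1]}v_\alpha(f)\,m(d\alpha),\quad v_\alpha(f)=\frac{\mu(\Omega)}{\alpha\nu(\Omega)}\int_0^\infty\min\big(\nu(\{\omega:f(\omega)>z\}),\alpha\nu(\Omega)\big)\,dz,$$ where $v_\mu(f)=\int_0^\infty v_\mu(\{\omega:f(\omega)>z\})\,dz$.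
   Context: $\Sigma$ denotes the set of all classes $\mathcal I\subset\mathcal F$ that are chains (totally ordered by inclusion), contain $\emptyset$ and $\Omega$, and generate $\mathcal F$ as a $\sigma$-algebra. $\frac{d\mu}{d\nu}$ is the non-negative Radon–Nikodym derivative. *)

theory Defs
  imports "HOL-Probability.Probability"
begin

definition Sigma_chains :: "'a measure \<Rightarrow> 'a set set set" where
  "Sigma_chains M = {I. I \<subseteq> sets M \<and> {} \<in> I \<and> space M \<in> I \<and>
       (\<forall>A\<in>I. \<forall>B\<in>I. A \<subseteq> B \<or> B \<subseteq> A) \<and> sigma_sets (space M) I = sets M}"

definition Fmu :: "'a measure \<Rightarrow> 'a measure \<Rightarrow> real \<Rightarrow> ennreal" where
  "Fmu \<nu> \<mu> y = emeasure \<nu> {\<omega>\<in>space \<nu>. RN_deriv \<nu> \<mu> \<omega> \<le> ennreal y}"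

definition Fmu_inf :: "'a measure \<Rightarrow> 'a measure \<Rightarrow> ennreal" where
  "Fmu_inf \<nu> \<mu> = Lim at_top (Fmu \<nu> \<mu>)"

definition vmu_set :: "'a measure \<Rightarrow> 'a measure \<Rightarrow> 'a set \<Rightarrow> ennreal" where
  "vmu_set \<nu> \<mu> A =
     (\<integral>\<^sup>+ z\<in>{0..}. min (emeasure \<nu> (space \<nu>) - Fmu \<nu> \<mu> z) (emeasure \<nu> A) \<partial>lborel)"

definition vmu_fun :: "'a measure \<Rightarrow> 'a measure \<Rightarrow> ('a \<Rightarrow> real) \<Rightarrow> ennreal" where
  "vmu_fun \<nu> \<mu> f = (\<integral>\<^sup>+ z\<in>{0..}. vmu_set \<nu> \<mu> {\<omega>\<in>space \<nu>. f \<omega> > z} \<partial>lborel)"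

definition valpha :: "'a measure \<Rightarrow> 'a measure \<Rightarrow> real \<Rightarrow> ('a \<Rightarrow> real) \<Rightarrow> ennreal" where
  "valpha \<nu> \<mu> \<alpha> f =
     emeasure \<mu> (space \<mu>) / (ennreal \<alpha> * emeasure \<nu> (space \<nu>)) *
     (\<integral>\<^sup>+ z\<in>{0..}. min (emeasure \<nu> {\<omega>\<in>space \<nu>. f \<omega> > z})
                           (ennreal \<alpha> * emeasure \<nu> (space \<nu>)) \<partial>lborel)"

end

theory Submission
  imports Defs
begin

text \<open>Write g = d\<mu>/d\<nu> and G(y) = \<nu>(g > y) = \<nu>(\<Omega>) - F_\<mu>(y), so that v_\<mu>(f) is the double
  integral of min(G(y), \<nu>(f > t)) over y, t \<ge> 0. By the layer-cake formula G integrates to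
  \<mu>(\<Omega>), hence G/\<mu>(\<Omega>) is a probability density on [0,\<infinity>), and the defining relation of m
  says precisely that m is the image of this density under y \<mapsto> G(y)/\<nu>(\<Omega>). Substituting
  \<alpha> = G(y)/\<nu>(\<Omega>), the density factor G(y)/\<mu>(\<Omega>) cancels the prefactor \<mu>(\<Omega>)/(\<alpha>\<nu>(\<Omega>)) of
  v_\<alpha>, leaving min(G(y), \<nu>(f > t)) integrated in the other order; Tonelli finishes.\<close>

lemma emeasure_lborel_nonneg_less_ennreal:
  "emeasure lborel {y::real. 0 \<le> y \<and> ennreal y < c} = c"
proof (cases c)
  case (real r)
  then have "{y. 0 \<le> y \<and> ennreal y < c} = {0..<r}"
    by (auto simp: ennreal_less_iff)
  then show ?thesis
    using real by (simp add: emeasure_lborel_Ico)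
next
  case top
  have "emeasure lborel {0::real..} = \<infinity>"
  proof (rule ccontr)
    assume "emeasure lborel {0::real..} \<noteq> \<infinity>"
    then obtain r where r: "emeasure lborel {0::real..} = ennreal r" "0 \<le> r"
      by (cases "emeasure lborel {0::real..}") auto
    have "emeasure lborel {0..<r + 1} \<le> emeasure lborel {0::real..}"
      by (rule emeasure_mono) auto
    then show False
      using r by (simp add: emeasure_lborel_Ico ennreal_le_iff)
  qed
  moreover have "{y. 0 \<le> y \<and> ennreal y < c} = {0..}"
    using top by auto
  ultimately show ?thesis
    using top by simp
qed

lemma nn_integral_layer_cake:
  assumes "sigma_finite_measure M" and g[measurable]: "g \<in> borel_measurable M"
  shows "(\<integral>\<^sup>+ y\<in>{0..}. emeasure M {x\<in>space M. ennreal y < g x} \<partial>lborel) = (\<integral>\<^sup>+ x. g x \<partial>M)"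
proof -
  interpret pair_sigma_finite M lborel
    using assms(1) by (simp add: pair_sigma_finite_def lborel.sigma_finite_measure_axioms)
  let ?I = "\<lambda>x y. indicator {0..} y * indicator {x\<in>space M. ennreal y < g x} x :: ennreal"
  have "(\<integral>\<^sup>+ y\<in>{0..}. emeasure M {x\<in>space M. ennreal y < g x} \<partial>lborel)
      = (\<integral>\<^sup>+ y. (\<integral>\<^sup>+ x. ?I x y \<partial>M) \<partial>lborel)"
    by (intro nn_integral_cong) (simp add: nn_integral_cmult mult.commute)
  also have "\<dots> = (\<integral>\<^sup>+ x. (\<integral>\<^sup>+ y. ?I x y \<partial>lborel) \<partial>M)"
    by (rule Fubini') measurable
  also have "\<dots> = (\<integral>\<^sup>+ x. emeasure lborel {y. 0 \<le> y \<and> ennreal y < g x} \<partial>M)"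
  proof (intro nn_integral_cong)
    fix x assume "x \<in> space M"
    then have "?I x = indicator {y. 0 \<le> y \<and> ennreal y < g x}"
      by (auto simp: indicator_def)
    moreover have "{y. 0 \<le> y \<and> ennreal y < g x} \<in> sets lborel"
      by measurable
    ultimately show "(\<integral>\<^sup>+ y. ?I x y \<partial>lborel) = emeasure lborel {y. 0 \<le> y \<and> ennreal y < g x}"
      by simp
  qed
  finally show ?thesis
    by (simp add: emeasure_lborel_nonneg_less_ennreal)
qed

lemma tendsto_at_top_SUP_of_nat:
  fixes F :: "real \<Rightarrow> 'a::{complete_linorder, linorder_topology}"
  assumes "mono F"
  shows "(F \<longlongrightarrow> (SUP n. F (real n))) at_top"
proof (rule order_tendstoI)
  fix a assume "a < (SUP n. F (real n))"
  then obtain n where n: "a < F (real n)"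
    by (auto simp: less_SUP_iff)
  show "eventually (\<lambda>x. a < F x) at_top"
    unfolding eventually_at_top_linorder
    by (rule exI[of _ "real n"]) (auto intro: less_le_trans[OF n monoD[OF assms]])
next
  fix a assume a: "(SUP n. F (real n)) < a"
  have "F x \<le> (SUP n. F (real n))" for x
    using monoD[OF assms real_nat_ceiling_ge[of x]] by (rule order_trans) (rule SUP_upper, simp)
  then show "eventually (\<lambda>x. F x < a) at_top"
    using a by (intro always_eventually allI) (rule le_less_trans)
qed

lemma set_nn_integral_lborel_swap:
  fixes F :: "real \<Rightarrow> real \<Rightarrow> ennreal"
  assumes [measurable]: "case_prod F \<in> borel_measurable (lborel \<Otimes>\<^sub>M lborel)"
    and [measurable]: "A \<in> sets borel" "B \<in> sets borel"
  shows "(\<integral>\<^sup>+ x\<in>A. (\<integral>\<^sup>+ y\<in>B. F x y \<partial>lborel) \<partial>lborel) = (\<integral>\<^sup>+ y\<in>B. (\<integral>\<^sup>+ x\<in>A. F x y \<partial>lborel) \<partial>lborel)"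
proof -
  have indicator_inside: "(\<integral>\<^sup>+ x\<in>A. (\<integral>\<^sup>+ y\<in>B. G x y \<partial>lborel) \<partial>lborel)
      = (\<integral>\<^sup>+ x. (\<integral>\<^sup>+ y. G x y * indicator B y * indicator A x \<partial>lborel) \<partial>lborel)"
    if [measurable]: "case_prod G \<in> borel_measurable (lborel \<Otimes>\<^sub>M lborel)"
      and [measurable]: "A \<in> sets borel" "B \<in> sets borel" for G :: "real \<Rightarrow> real \<Rightarrow> ennreal" and A B
    by (intro nn_integral_cong nn_integral_multc[symmetric]) measurable
  have "(\<integral>\<^sup>+ x\<in>A. (\<integral>\<^sup>+ y\<in>B. F x y \<partial>lborel) \<partial>lborel)
      = (\<integral>\<^sup>+ x. (\<integral>\<^sup>+ y. F x y * indicator B y * indicator A x \<partial>lborel) \<partial>lborel)"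
    by (rule indicator_inside) measurable
  also have "\<dots> = (\<integral>\<^sup>+ y. (\<integral>\<^sup>+ x. F x y * indicator B y * indicator A x \<partial>lborel) \<partial>lborel)"
    by (rule lborel_pair.Fubini'[symmetric]) measurable
  also have "\<dots> = (\<integral>\<^sup>+ y\<in>B. (\<integral>\<^sup>+ x\<in>A. F x y \<partial>lborel) \<partial>lborel)"
    using indicator_inside[of "\<lambda>y x. F x y" B A] by (simp add: mult_ac)
  finally show ?thesis .
qed

lemma measurable_ident_restrict_space_borel:
  assumes "sets m = sets (restrict_space borel S)"
  shows "(\<lambda>x. x) \<in> measurable m borel"
  using measurable_restrict_space1[OF measurable_ident_sets[of borel borel]]
  by (subst measurable_cong_sets[OF assms refl]) simp

lemma distr_eq_of_emeasure_Ioc_eq: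
  fixes m :: "real measure" and h :: "'a \<Rightarrow> real"
  assumes sets_m: "sets m = sets (restrict_space borel {0<..1})"
    and h[measurable]: "h \<in> borel_measurable D"
    and h_range: "AE y in D. h y \<in> {0<..1}"
    and D_finite: "emeasure D (space D) \<noteq> \<infinity>"
    and eq: "\<And>\<gamma>. \<gamma> \<in> {0<..1} \<Longrightarrow> emeasure m {0<..\<gamma>} = emeasure D {y\<in>space D. h y \<le> \<gamma>}"
  shows "distr m borel (\<lambda>x. x) = distr D borel h"
proof -
  have space_m: "space m = {0<..1}"
    using sets_eq_imp_space_eq[OF sets_m] by (simp add: space_restrict_space)
  have [measurable]: "(\<lambda>x. x) \<in> measurable m borel"
    using sets_m by (rule measurable_ident_restrict_space_borel)
  have Iic_eq: "emeasure (distr m borel (\<lambda>x. x)) {..x} = emeasure (distr D borel h) {..x}" for x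
  proof (cases "0 < x")
    case True
    have "emeasure (distr m borel (\<lambda>x. x)) {..x} = emeasure m {0<..min x 1}"
      using True by (subst emeasure_distr) (auto simp: space_m intro!: arg_cong[where f="emeasure m"])
    also have "\<dots> = emeasure D {y\<in>space D. h y \<le> min x 1}"
      using True by (intro eq) auto
    also have "\<dots> = emeasure D {y\<in>space D. h y \<le> x}"
    proof (rule emeasure_eq_AE)
      show "AE y in D. (y \<in> {y\<in>space D. h y \<le> min x 1}) = (y \<in> {y\<in>space D. h y \<le> x})"
        using h_range by eventually_elim auto
    qed auto
    finally show ?thesis
      by (subst emeasure_distr) (auto simp: vimage_def Int_def conj_commute)
  next
    case False
    have "AE y in D. \<not> h y \<le> x"
      using h_range by eventually_elim (use False in auto)
    then have null: "emeasure D {y\<in>space D. h y \<le> x} = 0"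
      by (subst (asm) AE_iff_measurable[OF _ refl]) auto
    have "{..x} \<inter> space m = {}"
      using False by (auto simp: space_m)
    then have "emeasure (distr m borel (\<lambda>x. x)) {..x} = 0"
      by (subst emeasure_distr) simp_all
    also have "\<dots> = emeasure (distr D borel h) {..x}"
      using null by (subst emeasure_distr) (auto simp: vimage_def Int_def conj_commute)
    finally show ?thesis .
  qed
  have "emeasure (distr m borel (\<lambda>x. x)) UNIV = emeasure D {y\<in>space D. h y \<le> 1}"
    by (subst emeasure_distr) (auto simp: space_m eq)
  also have "\<dots> \<le> emeasure D (space D)"
    by (rule emeasure_space)
  finally have "emeasure (distr m borel (\<lambda>x. x)) UNIV \<noteq> \<infinity>"
    using D_finite by (auto simp: top_unique)
  then have "finite_borel_measure (distr m borel (\<lambda>x. x))"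
    by (intro finite_borel_measure.intro finite_borel_measure_axioms.intro finite_measureI) simp_all
  moreover have "finite_borel_measure (distr D borel h)"
    by (intro finite_borel_measure.intro finite_borel_measure_axioms.intro
        finite_measure.finite_measure_distr finite_measureI D_finite h) simp
  ultimately show ?thesis
    by (rule cdf_unique') (simp add: fun_eq_iff cdf_def measure_def Iic_eq)
qed

lemma nn_integral_eq_of_emeasure_Ioc_eq:
  fixes m :: "real measure" and h :: "'a \<Rightarrow> real"
  assumes "sets m = sets (restrict_space borel {0<..1})"
    and "h \<in> borel_measurable D" and "AE y in D. h y \<in> {0<..1}"
    and "emeasure D (space D) \<noteq> \<infinity>"
    and "\<And>\<gamma>. \<gamma> \<in> {0<..1} \<Longrightarrow> emeasure m {0<..\<gamma>} = emeasure D {y\<in>space D. h y \<le> \<gamma>}"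
    and \<phi>: "\<phi> \<in> borel_measurable borel"
  shows "(\<integral>\<^sup>+ \<alpha>. \<phi> \<alpha> \<partial>m) = (\<integral>\<^sup>+ y. \<phi> (h y) \<partial>D)"
proof -
  have "(\<lambda>x. x) \<in> measurable m borel"
    using assms(1) by (rule measurable_ident_restrict_space_borel)
  then have "(\<integral>\<^sup>+ \<alpha>. \<phi> \<alpha> \<partial>m) = (\<integral>\<^sup>+ \<alpha>. \<phi> \<alpha> \<partial>distr m borel (\<lambda>x. x))"
    using \<phi> by (simp add: nn_integral_distr)
  also have "\<dots> = (\<integral>\<^sup>+ \<alpha>. \<phi> \<alpha> \<partial>distr D borel h)"
    using distr_eq_of_emeasure_Ioc_eq[OF assms(1-5)] by simp
  also have "\<dots> = (\<integral>\<^sup>+ y. \<phi> (h y) \<partial>D)"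
    using assms(2) \<phi> by (simp add: nn_integral_distr)
  finally show ?thesis .
qed

lemma ennreal_divide_mult_divide_cancel:
  fixes a b z :: ennreal
  assumes "a \<notin> {0, \<infinity>}" and "b \<notin> {0, \<infinity>}"
  shows "a / b * (b / a * z) = z"
  using assms by (metis divide_eq_1_ennreal ennreal_divide_times ennreal_times_divide
      infinity_ennreal_def insert_iff mult_1)

lemma valpha_rescaled:
  assumes "0 < \<alpha>"
    and "emeasure \<nu> (space \<nu>) \<notin> {0, \<infinity>}" and "emeasure \<mu> (space \<mu>) \<notin> {0, \<infinity>}"
  shows "ennreal \<alpha> * emeasure \<nu> (space \<nu>) / emeasure \<mu> (space \<mu>) * valpha \<nu> \<mu> \<alpha> f
    = (\<integral>\<^sup>+ z\<in>{0..}. min (emeasure \<nu> {\<omega>\<in>space \<nu>. f \<omega> > z}) (ennreal \<alpha> * emeasure \<nu> (space \<nu>)) \<partial>lborel)"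
proof -
  have "ennreal \<alpha> * emeasure \<nu> (space \<nu>) \<notin> {0, \<infinity>}"
    using assms by (auto simp: ennreal_mult_eq_top_iff)
  then show ?thesis
    unfolding valpha_def using assms(3) by (rule ennreal_divide_mult_divide_cancel)
qed

locale finite_ac_measures = nu: finite_measure \<nu> + mu: finite_measure \<mu> for \<nu> \<mu> :: "'a measure" +
  assumes sets_eq: "sets \<mu> = sets \<nu>" and abs_cont: "absolutely_continuous \<nu> \<mu>"
begin

definition RN_tail :: "real \<Rightarrow> ennreal" where
  "RN_tail y = emeasure \<nu> {\<omega>\<in>space \<nu>. ennreal y < RN_deriv \<nu> \<mu> \<omega>}"

definition tail_fraction :: "real \<Rightarrow> real" where
  "tail_fraction y = measure \<nu> {\<omega>\<in>space \<nu>. ennreal y < RN_deriv \<nu> \<mu> \<omega>} / measure \<nu> (space \<nu>)"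

definition tail_measure :: "real measure" where
  "tail_measure = density lborel (\<lambda>y. indicator {0..} y * RN_tail y / emeasure \<mu> (space \<mu>))"

lemma sets_tail_measure[measurable_cong]: "sets tail_measure = sets borel"
  by (simp add: tail_measure_def)

lemma space_tail_measure[simp]: "space tail_measure = UNIV"
  by (simp add: tail_measure_def)

lemma borel_measurable_RN_tail[measurable]: "RN_tail \<in> borel_measurable borel"
  unfolding RN_tail_def by measurable

lemma RN_tail_eq_measure:
  "RN_tail y = ennreal (measure \<nu> {\<omega>\<in>space \<nu>. ennreal y < RN_deriv \<nu> \<mu> \<omega>})"
  unfolding RN_tail_def by (rule nu.emeasure_eq_measure)

lemma borel_measurable_tail_fraction[measurable]: "tail_fraction \<in> borel_measurable borel"
proof -
  have "tail_fraction = (\<lambda>y. enn2real (RN_tail y) / measure \<nu> (space \<nu>))"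
    by (simp add: fun_eq_iff tail_fraction_def RN_tail_eq_measure)
  then show ?thesis
    by simp
qed

lemma measure_space_pos:
  assumes "emeasure \<mu> (space \<mu>) \<noteq> 0"
  shows "0 < measure \<nu> (space \<nu>)"
proof (rule ccontr)
  assume "\<not> 0 < measure \<nu> (space \<nu>)"
  then have "measure \<nu> (space \<nu>) = 0"
    using measure_nonneg[of \<nu> "space \<nu>"] by linarith
  then have "space \<nu> \<in> null_sets \<nu>"
    by (simp add: null_sets_def nu.emeasure_eq_measure)
  then have "space \<nu> \<in> null_sets \<mu>"
    using abs_cont unfolding absolutely_continuous_def by auto
  then show False
    using assms sets_eq_imp_space_eq[OF sets_eq] by auto
qed

lemma ennreal_tail_fraction:
  assumes "0 < measure \<nu> (space \<nu>)"
  shows "ennreal (tail_fraction y) * emeasure \<nu> (space \<nu>) = RN_tail y"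
  using assms
  by (simp add: tail_fraction_def RN_tail_eq_measure nu.emeasure_eq_measure ennreal_mult[symmetric])

lemma Fmu_eq_measure:
  "Fmu \<nu> \<mu> y = ennreal (measure \<nu> (space \<nu>) - measure \<nu> {\<omega>\<in>space \<nu>. ennreal y < RN_deriv \<nu> \<mu> \<omega>})"
proof -
  have "{\<omega>\<in>space \<nu>. RN_deriv \<nu> \<mu> \<omega> \<le> ennreal y} = space \<nu> - {\<omega>\<in>space \<nu>. ennreal y < RN_deriv \<nu> \<mu> \<omega>}"
    by (auto simp: not_less)
  then show ?thesis
    unfolding Fmu_def nu.emeasure_eq_measure by (simp add: nu.finite_measure_Diff)
qed

lemma emeasure_space_minus_Fmu: "emeasure \<nu> (space \<nu>) - Fmu \<nu> \<mu> y = RN_tail y"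
  unfolding Fmu_eq_measure RN_tail_eq_measure nu.emeasure_eq_measure
  by (subst ennreal_minus) (auto intro: nu.finite_measure_mono)

lemma Fmu_ge_iff:
  assumes "0 < measure \<nu> (space \<nu>)" and "\<gamma> \<le> 1"
  shows "ennreal (1 - \<gamma>) * emeasure \<nu> (space \<nu>) \<le> Fmu \<nu> \<mu> y \<longleftrightarrow> tail_fraction y \<le> \<gamma>"
proof -
  let ?G = "measure \<nu> {\<omega>\<in>space \<nu>. ennreal y < RN_deriv \<nu> \<mu> \<omega>}"
  have "?G \<le> measure \<nu> (space \<nu>)"
    by (rule nu.finite_measure_mono) auto
  then have "ennreal (1 - \<gamma>) * emeasure \<nu> (space \<nu>) \<le> Fmu \<nu> \<mu> y \<longleftrightarrow>
      (1 - \<gamma>) * measure \<nu> (space \<nu>) \<le> measure \<nu> (space \<nu>) - ?G"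
    using assms by (simp add: Fmu_eq_measure nu.emeasure_eq_measure ennreal_mult[symmetric])
  also have "\<dots> \<longleftrightarrow> tail_fraction y \<le> \<gamma>"
    using assms(1) by (simp add: tail_fraction_def pos_divide_le_eq algebra_simps)
  finally show ?thesis .
qed

lemma Fmu_inf_eq: "Fmu_inf \<nu> \<mu> = emeasure \<nu> (space \<nu>)"
proof -
  have mono: "mono (Fmu \<nu> \<mu>)"
    unfolding Fmu_def mono_def by (auto intro!: emeasure_mono intro: order_trans[OF _ ennreal_leI])
  have "(SUP n. Fmu \<nu> \<mu> (real n)) = emeasure \<nu> (\<Union>n. {\<omega>\<in>space \<nu>. RN_deriv \<nu> \<mu> \<omega> \<le> ennreal (real n)})"
    unfolding Fmu_def
    by (rule SUP_emeasure_incseq) (auto simp: incseq_def intro: order_trans[OF _ ennreal_leI])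
  also have "\<dots> = emeasure \<nu> (space \<nu>)"
  proof (rule emeasure_eq_AE)
    show "AE \<omega> in \<nu>. (\<omega> \<in> (\<Union>n. {\<omega>\<in>space \<nu>. RN_deriv \<nu> \<mu> \<omega> \<le> ennreal (real n)})) = (\<omega> \<in> space \<nu>)"
      using nu.RN_deriv_finite[OF mu.sigma_finite_measure_axioms abs_cont sets_eq]
    proof eventually_elim
      case (elim \<omega>)
      then obtain n where "RN_deriv \<nu> \<mu> \<omega> < of_nat n"
        using ennreal_Ex_less_of_nat by (auto simp: less_top)
      then show ?case
        by (auto simp: ennreal_of_nat_eq_real_of_nat intro!: less_imp_le)
    qed
  qed auto
  finally show ?thesis
    using tendsto_at_top_SUP_of_nat[OF mono] unfolding Fmu_inf_def by (intro tendsto_Lim) auto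
qed

lemma nn_integral_RN_tail: "(\<integral>\<^sup>+ y\<in>{0..}. RN_tail y \<partial>lborel) = emeasure \<mu> (space \<mu>)"
proof -
  have "emeasure \<mu> (space \<mu>) = emeasure (density \<nu> (RN_deriv \<nu> \<mu>)) (space \<nu>)"
    using nu.density_RN_deriv[OF abs_cont sets_eq] sets_eq_imp_space_eq[OF sets_eq] by simp
  also have "\<dots> = (\<integral>\<^sup>+ \<omega>. RN_deriv \<nu> \<mu> \<omega> \<partial>\<nu>)"
    by (subst emeasure_density) (auto intro!: nn_integral_cong)
  finally show ?thesis
    unfolding RN_tail_def
    by (simp add: nn_integral_layer_cake nu.sigma_finite_measure_axioms)
qed

lemma vmu_fun_eq:
  "vmu_fun \<nu> \<mu> f = (\<integral>\<^sup>+ t\<in>{0..}. (\<integral>\<^sup>+ y\<in>{0..}.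
      min (RN_tail y) (emeasure \<nu> {\<omega>\<in>space \<nu>. f \<omega> > t}) \<partial>lborel) \<partial>lborel)"
  unfolding vmu_fun_def vmu_set_def emeasure_space_minus_Fmu ..

lemma vmu_fun_eq_0:
  assumes "emeasure \<mu> (space \<mu>) = 0"
  shows "vmu_fun \<nu> \<mu> f = 0"
proof -
  have "(\<integral>\<^sup>+ y\<in>{0..}. min (RN_tail y) c \<partial>lborel) \<le> (\<integral>\<^sup>+ y\<in>{0..}. RN_tail y \<partial>lborel)" for c
    by (intro nn_integral_mono) (auto simp: indicator_def)
  then show ?thesis
    using assms by (simp add: vmu_fun_eq nn_integral_RN_tail)
qed

lemma emeasure_tail_measure:
  assumes "A \<in> sets borel"
  shows "emeasure tail_measure A = (\<integral>\<^sup>+ y\<in>{0..} \<inter> A. RN_tail y \<partial>lborel) / emeasure \<mu> (space \<mu>)"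
  unfolding tail_measure_def using assms
  by (subst emeasure_density, simp, simp, subst nn_integral_divide[symmetric], simp)
     (auto intro!: nn_integral_cong simp: indicator_def)

lemma emeasure_space_tail_measure:
  assumes "emeasure \<mu> (space \<mu>) \<noteq> 0"
  shows "emeasure tail_measure (space tail_measure) = 1"
  using assms by (simp add: emeasure_tail_measure nn_integral_RN_tail divide_eq_1_ennreal)

lemma emeasure_tail_measure_fraction_le:
  assumes "emeasure \<mu> (space \<mu>) \<noteq> 0" and "\<gamma> \<le> 1"
  shows "emeasure tail_measure {y. tail_fraction y \<le> \<gamma>} =
    (\<integral>\<^sup>+ y\<in>{y. 0 \<le> y \<and> Fmu \<nu> \<mu> y \<ge> ennreal (1 - \<gamma>) * emeasure \<nu> (space \<nu>)}.
        (Fmu_inf \<nu> \<mu> - Fmu \<nu> \<mu> y) \<partial>lborel) / emeasure \<mu> (space \<mu>)"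
proof -
  have "{y. 0 \<le> y \<and> Fmu \<nu> \<mu> y \<ge> ennreal (1 - \<gamma>) * emeasure \<nu> (space \<nu>)} =
      {0..} \<inter> {y. tail_fraction y \<le> \<gamma>}"
    using Fmu_ge_iff[OF measure_space_pos[OF assms(1)] assms(2)] by auto
  then show ?thesis
    by (simp add: emeasure_tail_measure Fmu_inf_eq emeasure_space_minus_Fmu)
qed

lemma AE_tail_fraction:
  assumes "emeasure \<mu> (space \<mu>) \<noteq> 0"
  shows "AE y in tail_measure. tail_fraction y \<in> {0<..1}"
  unfolding tail_measure_def
proof (subst AE_density, simp, intro AE_I2 impI)
  fix y assume "0 < indicator {0..} y * RN_tail y / emeasure \<mu> (space \<mu>)"
  then have "RN_tail y \<noteq> 0"
    by auto
  then have "0 < measure \<nu> {\<omega>\<in>space \<nu>. ennreal y < RN_deriv \<nu> \<mu> \<omega>}"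
    by (simp add: RN_tail_eq_measure zero_less_measure_iff)
  moreover have "measure \<nu> {\<omega>\<in>space \<nu>. ennreal y < RN_deriv \<nu> \<mu> \<omega>} \<le> measure \<nu> (space \<nu>)"
    by (rule nu.finite_measure_mono) auto
  ultimately show "tail_fraction y \<in> {0<..1}"
    using measure_space_pos[OF assms] by (simp add: tail_fraction_def)
qed

lemma borel_measurable_valpha:
  assumes [measurable]: "f \<in> borel_measurable \<nu>"
  shows "(\<lambda>\<alpha>. valpha \<nu> \<mu> \<alpha> f) \<in> borel_measurable borel"
  unfolding valpha_def by measurable

lemma nn_integral_valpha_tail_measure:
  assumes "emeasure \<mu> (space \<mu>) \<noteq> 0" and [measurable]: "f \<in> borel_measurable \<nu>"
  shows "(\<integral>\<^sup>+ y. valpha \<nu> \<mu> (tail_fraction y) f \<partial>tail_measure) =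
    (\<integral>\<^sup>+ y\<in>{0..}. (\<integral>\<^sup>+ t\<in>{0..}.
      min (RN_tail y) (emeasure \<nu> {\<omega>\<in>space \<nu>. f \<omega> > t}) \<partial>lborel) \<partial>lborel)"
proof -
  have N_pos: "0 < measure \<nu> (space \<nu>)"
    using measure_space_pos[OF assms(1)] .
  have "RN_tail y / emeasure \<mu> (space \<mu>) * valpha \<nu> \<mu> (tail_fraction y) f =
      (\<integral>\<^sup>+ t\<in>{0..}. min (RN_tail y) (emeasure \<nu> {\<omega>\<in>space \<nu>. f \<omega> > t}) \<partial>lborel)" for y
  proof (cases "RN_tail y = 0")
    case False
    then have "0 < tail_fraction y"
      using N_pos by (simp add: tail_fraction_def RN_tail_eq_measure zero_less_measure_iff)
    moreover have "emeasure \<nu> (space \<nu>) \<notin> {0, \<infinity>}"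
      using N_pos by (simp add: nu.emeasure_eq_measure)
    ultimately show ?thesis
      using valpha_rescaled[of "tail_fraction y" \<nu> \<mu> f, unfolded ennreal_tail_fraction[OF N_pos]] assms(1)
      by (simp add: min.commute)
  qed simp \<comment> \<open>then valpha is taken at the junk point \<alpha> = 0, but the factor RN_tail y = 0 kills it\<close>
  then show ?thesis
    unfolding tail_measure_def
    by (subst nn_integral_density)
       (auto intro!: nn_integral_cong measurable_compose[OF _ borel_measurable_valpha] simp: indicator_def)
qed

end

theorem proposition19:
  fixes \<nu> \<mu> :: "'a measure" and m :: "real measure" and f :: "'a \<Rightarrow> real"
  assumes "Sigma_chains \<nu> \<noteq> {}"
    and "finite_measure \<nu>" and "finite_measure \<mu>"
    and "sets \<mu> = sets \<nu>" and "absolutely_continuous \<nu> \<mu>"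
    and "sets m = sets (restrict_space borel {0<..1})"
    and "\<forall>\<gamma>\<in>{0<..1::real}. emeasure m {0<..\<gamma>} =
          (\<integral>\<^sup>+ y\<in>{y. 0 \<le> y \<and> Fmu \<nu> \<mu> y \<ge> ennreal (1 - \<gamma>) * emeasure \<nu> (space \<nu>)}.
              (Fmu_inf \<nu> \<mu> - Fmu \<nu> \<mu> y) \<partial>lborel) / emeasure \<mu> (space \<mu>)"
    and "f \<in> borel_measurable \<nu>" and "\<forall>\<omega>\<in>space \<nu>. 0 \<le> f \<omega>"
  shows "vmu_fun \<nu> \<mu> f = (\<integral>\<^sup>+ \<alpha>. valpha \<nu> \<mu> \<alpha> f \<partial>m)"
proof -
  interpret finite_ac_measures \<nu> \<mu>
    using assms(2-5) by (intro finite_ac_measures.intro finite_ac_measures_axioms.intro)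
  note [measurable] = assms(8)
  show ?thesis
  proof (cases "emeasure \<mu> (space \<mu>) = 0")
    case True
    then show ?thesis
      by (simp add: vmu_fun_eq_0 valpha_def)
  next
    case False
    have "(\<integral>\<^sup>+ \<alpha>. valpha \<nu> \<mu> \<alpha> f \<partial>m) = (\<integral>\<^sup>+ y. valpha \<nu> \<mu> (tail_fraction y) f \<partial>tail_measure)"
    proof (rule nn_integral_eq_of_emeasure_Ioc_eq[OF assms(6) _ AE_tail_fraction[OF False]])
      show "emeasure tail_measure (space tail_measure) \<noteq> \<infinity>"
        using emeasure_space_tail_measure[OF False] by simp
      fix \<gamma> :: real assume "\<gamma> \<in> {0<..1}"
      then show "emeasure m {0<..\<gamma>} = emeasure tail_measure {y\<in>space tail_measure. tail_fraction y \<le> \<gamma>}"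
        using assms(7) False by (simp add: emeasure_tail_measure_fraction_le)
    qed (simp_all add: borel_measurable_valpha)
    also have "\<dots> = (\<integral>\<^sup>+ y\<in>{0..}. (\<integral>\<^sup>+ t\<in>{0..}.
        min (RN_tail y) (emeasure \<nu> {\<omega>\<in>space \<nu>. f \<omega> > t}) \<partial>lborel) \<partial>lborel)"
      using False by (rule nn_integral_valpha_tail_measure) measurable
    also have "\<dots> = vmu_fun \<nu> \<mu> f"
      unfolding vmu_fun_eq by (rule set_nn_integral_lborel_swap) measurable
    finally show ?thesis ..
  qed
qed

end
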